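(* Let $(\mu,\sigma)\in\mathbb{K}[[\mathtt{x}]]\times\mathfrak{M}$ be topologically nilpotent, i.e. $\lim_{n\to\infty}(\mu,\sigma)^{\rtimes n}=(0,0)$. Then for every sequence of scalars $(\alpha_n)_{n\in\mathbb{N}}$ in $\mathbb{K}$, the family $(\alpha_n(\mu,\sigma)^{\rtimes n})_{n\in\mathbb{N}}$ is summable in $\mathbb{K}[[\mathtt{x}]]\times\mathfrak{M}$.
   Context: $\mathbb{K}$ is a field of characteristic zero (discrete topology); $\mathbb{K}[[\mathtt{x}]]$ has the $(\mathtt{x})$-adic topology; $\mathfrak{M}:=\mathtt{x}\mathbb{K}[[\mathtt{x}]]$ the subspace topology; $\mathbb{K}[[\mathtt{x}]]\times\mathfrak{M}$ the product topology and componentwise vector space structure. For $f=\sum f_n\mathtt{x}^n$ and $\sigma\in\mathfrak{M}$, $f\circ\sigma:=\sum f_n\sigma^n$. Product: $(\mu_1,\sigma_1)\rtimes(\mu_2,\sigma_2):=((\mu_1\circ\sigma_2)\mu_2,\sigma_1\circ\sigma_2)$; powers $(\mu,\sigma)^{\rtimes0}:=(1,\mathtt{x})$, $(\mu,\sigma)^{\rtimes n}$ the $n$-fold product. A family $(u_n)$ in a Hausdorff commutative topological group is summable if the net of finite partial sums over finite subsets of $\mathbb{N}$ (ordered by inclusion) converges. *)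

theory Defs
  imports "HOL-Analysis.Analysis" "HOL-Computational_Algebra.Formal_Power_Series"
begin

definition fpsM :: "'a::field fps set" where
  "fpsM = {s. fps_nth s 0 = 0}"

definition sdp :: "'a::field fps \<times> 'a fps \<Rightarrow> 'a fps \<times> 'a fps \<Rightarrow> 'a fps \<times> 'a fps" where
  "sdp p q = ((fst p oo snd q) * fst q, snd p oo snd q)"

fun sdpow :: "'a::field fps \<times> 'a fps \<Rightarrow> nat \<Rightarrow> 'a fps \<times> 'a fps" where
  "sdpow p 0 = (1, fps_X)"
| "sdpow p (Suc n) = sdp p (sdpow p n)"

definition sscale :: "'a::field \<Rightarrow> 'a fps \<times> 'a fps \<Rightarrow> 'a fps \<times> 'a fps" where
  "sscale c p = (fps_const c * fst p, fps_const c * snd p)"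

end

theory Submission
  imports Defs
begin

text \<open>
  In the (\<open>x\<close>)-adic topology a sequence tends to \<open>0\<close> iff each coefficient is eventually \<open>0\<close>;
  then every coefficient of a partial sum stabilises once the finite index set is large enough,
  so every null sequence of power series is summable. Topological nilpotency says that both
  components of the powers of \<open>(\<mu>, \<sigma>)\<close> are null sequences, scalars do not disturb this, and summability
  in the product is componentwise. The sum stays in \<open>fpsM\<close> because every summand's second
  component has vanishing constant term.
\<close>

lemma has_sum_Pair:
  assumes "(f has_sum a) A" and "(g has_sum b) A"
  shows "((\<lambda>x. (f x, g x)) has_sum (a, b)) A"
proof -
  have "sum (\<lambda>x. (f x, g x)) = (\<lambda>F. (sum f F, sum g F))"
    by (rule ext, rule prod_eqI) (simp_all only: fst_sum snd_sum fst_conv snd_conv)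
  then show ?thesis
    using tendsto_Pair[OF assms[unfolded has_sum_def]] unfolding has_sum_def by (simp only:)
qed

lemma fps_summable_on_if_LIMSEQ_zero:
  fixes h :: "nat \<Rightarrow> 'a::ab_group_add fps"
  assumes "h \<longlonglongrightarrow> 0"
  shows "h summable_on UNIV"
proof -
  have "\<forall>k. \<exists>N. \<forall>n\<ge>N. fps_nth (h n) k = 0"
    using assms by (simp add: tendsto_fps_iff eventually_sequentially)
  then obtain N where N: "\<And>k n. n \<ge> N k \<Longrightarrow> fps_nth (h n) k = 0"
    by metis
  define s where "s = Abs_fps (\<lambda>k. \<Sum>n<N k. fps_nth (h n) k)"
  have partial_sum_nth: "fps_nth (sum h F) k = fps_nth s k" if "finite F" "{..<N k} \<subseteq> F" for F k
  proof -
    have "fps_nth (sum h F) k = (\<Sum>n\<in>F. fps_nth (h n) k)"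
      by (simp add: fps_sum_nth)
    also have "\<dots> = (\<Sum>n<N k. fps_nth (h n) k)"
      by (rule sum.mono_neutral_right) (use that N in \<open>auto simp: not_less\<close>)
    finally show ?thesis
      by (simp add: s_def)
  qed
  have "(h has_sum s) UNIV"
    unfolding has_sum_def
  proof (rule tendsto_fpsI)
    show "\<forall>\<^sub>F F in finite_subsets_at_top UNIV. fps_nth (sum h F) k = fps_nth s k" for k
      unfolding eventually_finite_subsets_at_top
      by (rule exI[of _ "{..<N k}"]) (auto intro: partial_sum_nth)
  qed
  then show ?thesis
    by (rule has_sum_imp_summable)
qed

lemma fps_const_mult_LIMSEQ_zero:
  fixes h :: "nat \<Rightarrow> 'a::ring fps"
  assumes "h \<longlonglongrightarrow> 0"
  shows "(\<lambda>n. fps_const (c n) * h n) \<longlonglongrightarrow> 0"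
  using assms unfolding tendsto_fps_iff
  by (simp add: fps_mult_left_const_nth) (metis (mono_tags, lifting) eventually_mono mult_zero_right)

lemma has_sum_in_fpsM:
  assumes "(h has_sum s) A" and "\<And>x. x \<in> A \<Longrightarrow> h x \<in> fpsM"
  shows "s \<in> fpsM"
proof -
  have "\<forall>\<^sub>F F in finite_subsets_at_top A. fps_nth (sum h F) 0 = fps_nth s 0"
    using assms(1) unfolding has_sum_def tendsto_fps_iff by blast
  then obtain F where "finite F" "F \<subseteq> A" "fps_nth (sum h F) 0 = fps_nth s 0"
    unfolding eventually_finite_subsets_at_top by blast
  moreover have "fps_nth (sum h F) 0 = 0"
    using \<open>F \<subseteq> A\<close> assms(2) by (auto simp: fps_sum_nth fpsM_def intro: sum.neutral)
  ultimately show ?thesis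
    by (simp add: fpsM_def)
qed

lemma snd_sdpow_in_fpsM: "\<sigma> \<in> fpsM \<Longrightarrow> snd (sdpow (\<mu>, \<sigma>) n) \<in> fpsM"
  by (induction n) (auto simp: sdp_def fpsM_def)

theorem mainTheorem6:
  fixes \<mu> \<sigma> :: "'a::field_char_0 fps" and \<alpha> :: "nat \<Rightarrow> 'a"
  assumes "\<sigma> \<in> fpsM"
    and "(\<lambda>n. sdpow (\<mu>, \<sigma>) n) \<longlonglongrightarrow> (0, 0)"
  shows "\<exists>s. ((\<lambda>n. sscale (\<alpha> n) (sdpow (\<mu>, \<sigma>) n)) has_sum s) UNIV \<and> snd s \<in> fpsM"
proof -
  let ?p = "sdpow (\<mu>, \<sigma>)"
  let ?u = "\<lambda>n. fps_const (\<alpha> n) * fst (?p n)" and ?v = "\<lambda>n. fps_const (\<alpha> n) * snd (?p n)"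
  have "?u \<longlonglongrightarrow> 0" and "?v \<longlonglongrightarrow> 0"
    using tendsto_fst[OF assms(2)] tendsto_snd[OF assms(2)]
    by (simp_all add: fps_const_mult_LIMSEQ_zero)
  then obtain a b where a: "(?u has_sum a) UNIV" and b: "(?v has_sum b) UNIV"
    by (meson fps_summable_on_if_LIMSEQ_zero summable_on_def)
  have "?v n \<in> fpsM" for n
    using snd_sdpow_in_fpsM[OF assms(1)] by (simp add: fpsM_def)
  with b have "b \<in> fpsM"
    by (rule has_sum_in_fpsM)
  moreover have "((\<lambda>n. sscale (\<alpha> n) (?p n)) has_sum (a, b)) UNIV"
    using has_sum_Pair[OF a b] by (simp add: sscale_def)
  ultimately show ?thesis
    by auto
qed

end
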